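(* Let $\mathfrak g$ be a finite-dimensional complex simple Lie algebra with Cartan subalgebra $\mathfrak t$ and root system $\Phi_{\mathfrak g}$. Let $Q=\sum_{i=1}^pA_ix^i$ with $p\ge1$, $A_i\in\mathfrak t$, $A_p\ne0$; for $\alpha\in\Phi_{\mathfrak g}$ let $d_\alpha=\deg_x\bigl(\sum_i\alpha(A_i)x^i\bigr)$ (with $\deg_x(0)=0$) and for $i\in\{1,\dots,p\}$ let $$\mathbf B_i=\bigcap_{\alpha:\ d_\alpha<i}\operatorname{Ker}(\alpha)\cap\bigcap_{\alpha:\ d_\alpha=i}\bigl(\mathfrak t\setminus\operatorname{Ker}(\alpha)\bigr)\subset\mathfrak t,$$ so that $A_i\in\mathbf B_i$ and the pure local wild mapping class group satisfies $\Gamma_Q\simeq\prod_{i=1}^p\pi_1(\mathbf B_i,A_i)$. Then the number of indices $i\in\{1,\dots,p\}$ for which $\pi_1(\mathbf B_i,A_i)$ is nontrivial is at most $\operatorname{rk}(\mathfrak g)$.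
   Context: $\Gamma_Q=\pi_1(\mathbf B_Q,(A_1,\dots,A_p))$ where $\mathbf B_Q=\{(A_1',\dots,A_p')\in\mathfrak t^p:\deg_x(\sum_i\alpha(A_i')x^i)=d_\alpha\ \forall\alpha\in\Phi_{\mathfrak g}\}$; one has $\mathbf B_Q=\prod_i\mathbf B_i$. $\operatorname{rk}(\mathfrak g)=\dim\mathfrak t$. *)

theory Defs
  imports "HOL-Analysis.Analysis" "HOL-Computational_Algebra.Polynomial"
begin

text \<open>A finite-dimensional complex Lie algebra is modelled as complex^'n
  (any finite-dimensional complex vector space is isomorphic to such) with a bracket B.\<close>

definition lie_bracket :: "(complex^'n \<Rightarrow> complex^'n \<Rightarrow> complex^'n) \<Rightarrow> bool" where
  "lie_bracket B \<longleftrightarrow>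
     (\<forall>x y z. B (x + y) z = B x z + B y z) \<and>
     (\<forall>c x y. B (c *s x) y = c *s B x y) \<and>
     (\<forall>x. B x x = 0) \<and>
     (\<forall>x y z. B x (B y z) + B y (B z x) + B z (B x y) = 0)"

definition lie_ideal :: "(complex^'n \<Rightarrow> complex^'n \<Rightarrow> complex^'n) \<Rightarrow> (complex^'n) set \<Rightarrow> bool" where
  "lie_ideal B I \<longleftrightarrow> vec.subspace I \<and> (\<forall>x y. y \<in> I \<longrightarrow> B x y \<in> I)"

definition simple_lie_algebra :: "(complex^'n \<Rightarrow> complex^'n \<Rightarrow> complex^'n) \<Rightarrow> bool" where
  "simple_lie_algebra B \<longleftrightarrow> lie_bracket B \<and> (\<exists>x y. B x y \<noteq> 0) \<and>
     (\<forall>I. lie_ideal B I \<longrightarrow> I = {0} \<or> I = UNIV)"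

definition lie_subalgebra :: "(complex^'n \<Rightarrow> complex^'n \<Rightarrow> complex^'n) \<Rightarrow> (complex^'n) set \<Rightarrow> bool" where
  "lie_subalgebra B h \<longleftrightarrow> vec.subspace h \<and> (\<forall>x\<in>h. \<forall>y\<in>h. B x y \<in> h)"

primrec lcs :: "(complex^'n \<Rightarrow> complex^'n \<Rightarrow> complex^'n) \<Rightarrow> (complex^'n) set \<Rightarrow> nat \<Rightarrow> (complex^'n) set" where
  "lcs B h 0 = h"
| "lcs B h (Suc k) = vec.span {B x y | x y. x \<in> h \<and> y \<in> lcs B h k}"

definition cartan_subalgebra :: "(complex^'n \<Rightarrow> complex^'n \<Rightarrow> complex^'n) \<Rightarrow> (complex^'n) set \<Rightarrow> bool" where
  "cartan_subalgebra B h \<longleftrightarrow> lie_subalgebra B h \<and> (\<exists>k. lcs B h k = {0}) \<and>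
     {x. \<forall>y\<in>h. B x y \<in> h} = h"

text \<open>Roots: nonzero linear functionals on h (extended by 0 outside h) with nonzero root space.\<close>
definition lie_roots :: "(complex^'n \<Rightarrow> complex^'n \<Rightarrow> complex^'n) \<Rightarrow> (complex^'n) set \<Rightarrow> (complex^'n \<Rightarrow> complex) set" where
  "lie_roots B h = {\<alpha>. (\<forall>x\<in>h. \<forall>y\<in>h. \<alpha> (x + y) = \<alpha> x + \<alpha> y) \<and>
       (\<forall>c. \<forall>x\<in>h. \<alpha> (c *s x) = c * \<alpha> x) \<and>
       (\<forall>x. x \<notin> h \<longrightarrow> \<alpha> x = 0) \<and>
       (\<exists>x\<in>h. \<alpha> x \<noteq> 0) \<and>
       (\<exists>v. v \<noteq> 0 \<and> (\<forall>x\<in>h. B x v = \<alpha> x *s v))}"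

definition root_deg :: "(complex^'n \<Rightarrow> complex) \<Rightarrow> (nat \<Rightarrow> complex^'n) \<Rightarrow> nat \<Rightarrow> nat" where
  "root_deg \<alpha> A p = degree (\<Sum>i=1..p. monom (\<alpha> (A i)) i)"

definition Bstratum :: "(complex^'n) set \<Rightarrow> (complex^'n \<Rightarrow> complex) set \<Rightarrow> (nat \<Rightarrow> complex^'n) \<Rightarrow> nat \<Rightarrow> nat \<Rightarrow> (complex^'n) set" where
  "Bstratum h \<Phi> A p i = h \<inter> {x. \<forall>\<alpha>\<in>\<Phi>. root_deg \<alpha> A p < i \<longrightarrow> \<alpha> x = 0}
                          \<inter> {x. \<forall>\<alpha>\<in>\<Phi>. root_deg \<alpha> A p = i \<longrightarrow> \<alpha> x \<noteq> 0}"

definition trivial_pi1 :: "'a::real_normed_vector set \<Rightarrow> 'a \<Rightarrow> bool" where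
  "trivial_pi1 S a \<longleftrightarrow> (\<forall>g. path g \<and> path_image g \<subseteq> S \<and> pathstart g = a \<and> pathfinish g = a
      \<longrightarrow> homotopic_loops S g (linepath a a))"

end

theory Submission
  imports Defs
begin

text \<open>Let \<open>K\<^sub>i\<close> be the common kernel in \<open>t\<close> of the roots with \<open>d\<^sub>\<alpha> < i\<close>; these
  subspaces decrease with \<open>i\<close>. If no root has \<open>d\<^sub>\<alpha> = i\<close>, then \<open>B\<^sub>i = K\<^sub>i\<close> is a linear
  subspace, hence simply connected. If some root \<open>\<alpha>\<close> has \<open>d\<^sub>\<alpha> = i\<close>, then \<open>\<alpha>(A\<^sub>i)\<close> is the
  leading coefficient of \<open>\<Sum>\<^sub>j \<alpha>(A\<^sub>j) x\<^sup>j\<close>, so \<open>A\<^sub>i \<in> K\<^sub>i - K\<^sub>i\<^sub>+\<^sub>1\<close> and the dimension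
  drops. The dimension of \<open>K\<^sub>1 \<subseteq> t\<close> can drop at most \<open>dim t\<close> times.\<close>

lemma card_descents_le:
  fixes f :: "nat \<Rightarrow> nat"
  assumes "\<And>i. f (Suc i) \<le> f i"
  shows "card {i \<in> {1..p}. f (Suc i) < f i} + f (Suc p) \<le> f 1"
proof (induction p)
  case 0
  then show ?case by simp
next
  case (Suc p)
  have split: "{i \<in> {1..Suc p}. f (Suc i) < f i} =
      {i \<in> {1..p}. f (Suc i) < f i} \<union> (if f (Suc (Suc p)) < f (Suc p) then {Suc p} else {})"
    by (auto simp: le_Suc_eq)
  show ?case
  proof (cases "f (Suc (Suc p)) < f (Suc p)")
    case True
    then show ?thesis
      using Suc unfolding split by simp
  next
    case False
    then show ?thesis
      using Suc assms[of "Suc p"] unfolding split by simp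
  qed
qed

lemma card_proper_descents_le_dim:
  fixes K :: "nat \<Rightarrow> (complex^'n) set"
  assumes subspace: "\<And>i. vec.subspace (K i)"
    and decreasing: "\<And>i. K (Suc i) \<subseteq> K i"
  shows "card {i \<in> {1..p}. K (Suc i) \<noteq> K i} \<le> vec.dim (K 1)"
proof -
  define f where "f i = vec.dim (K i)" for i
  have "f (Suc i) < f i" if "K (Suc i) \<noteq> K i" for i
  proof -
    have span: "vec.span (K j) = K j" for j
      using subspace vec.span_eq_iff by blast
    have "vec.span (K (Suc i)) \<subset> vec.span (K i)"
      unfolding span using that decreasing[of i] by blast
    then show ?thesis
      unfolding f_def by (rule vec.dim_psubset)
  qed
  then have "card {i \<in> {1..p}. K (Suc i) \<noteq> K i} \<le> card {i \<in> {1..p}. f (Suc i) < f i}"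
    by (intro card_mono) auto
  also have "\<dots> \<le> f 1"
  proof -
    have "f (Suc i) \<le> f i" for i
      unfolding f_def using decreasing by (rule vec.dim_subset)
    then show ?thesis
      using card_descents_le[of f p] by fastforce
  qed
  finally show ?thesis
    unfolding f_def .
qed

lemma simply_connected_imp_trivial_pi1:
  assumes "simply_connected S"
  shows "trivial_pi1 S a"
  unfolding trivial_pi1_def
proof (intro allI impI)
  fix g
  assume g: "path g \<and> path_image g \<subseteq> S \<and> pathstart g = a \<and> pathfinish g = a"
  then have "a \<in> S"
    using pathstart_in_path_image[of g] by auto
  with g assms show "homotopic_loops S g (linepath a a)"
    unfolding simply_connected_eq_contractible_loop_any by auto
qed

lemma vec_subspace_imp_convex:
  fixes S :: "(complex^'n) set"
  assumes "vec.subspace S"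
  shows "convex S"
proof -
  have "c *\<^sub>R x = complex_of_real c *s x" for c and x :: "complex^'n"
    unfolding vec_eq_iff vector_scaleR_component vector_smult_component
    by (simp add: scaleR_conv_of_real)
  then have "subspace S"
    using assms unfolding vec.subspace_def subspace_def by simp
  then show ?thesis
    by (rule subspace_imp_convex)
qed

definition common_kernel :: "(complex^'n) set \<Rightarrow> (complex^'n \<Rightarrow> complex) set \<Rightarrow> (complex^'n) set"
  where "common_kernel h \<Psi> = h \<inter> {x. \<forall>\<alpha>\<in>\<Psi>. \<alpha> x = 0}"

lemma subspace_common_kernel:
  assumes "vec.subspace h"
    and add: "\<And>\<alpha> x y. \<alpha> \<in> \<Psi> \<Longrightarrow> x \<in> h \<Longrightarrow> y \<in> h \<Longrightarrow> \<alpha> (x + y) = \<alpha> x + \<alpha> y"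
    and scale: "\<And>\<alpha> c x. \<alpha> \<in> \<Psi> \<Longrightarrow> x \<in> h \<Longrightarrow> \<alpha> (c *s x) = c * \<alpha> x"
  shows "vec.subspace (common_kernel h \<Psi>)"
proof -
  have "0 \<in> h"
    using assms(1) by (rule vec.subspace_0)
  then have "\<alpha> 0 = 0" if "\<alpha> \<in> \<Psi>" for \<alpha>
    using scale[OF that, of 0 0] by simp
  with assms(1) show ?thesis
    unfolding vec.subspace_def common_kernel_def by (auto simp: add scale)
qed

lemma coeff_sum_monom:
  "coeff (\<Sum>j=1..p. monom (c j) j) i = (if i \<in> {1..p} then c i else 0)"
  by (simp add: coeff_sum coeff_monom)

lemma root_deg_less_imp_vanishes:
  assumes "i \<in> {1..p}" "root_deg \<alpha> A p < i"
  shows "\<alpha> (A i) = 0"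
  using assms coeff_eq_0[of "\<Sum>j=1..p. monom (\<alpha> (A j)) j" i]
    coeff_sum_monom[of "\<lambda>j. \<alpha> (A j)" p i]
  unfolding root_deg_def by simp

lemma root_deg_eq_imp_nonvanishing:
  assumes "i \<in> {1..p}" "root_deg \<alpha> A p = i"
  shows "\<alpha> (A i) \<noteq> 0"
proof -
  let ?q = "\<Sum>j=1..p. monom (\<alpha> (A j)) j"
  have "degree ?q = i"
    using assms(2) unfolding root_deg_def .
  with assms(1) have "?q \<noteq> 0"
    by auto
  then have "coeff ?q i \<noteq> 0"
    using leading_coeff_neq_0 \<open>degree ?q = i\<close> by metis
  with assms(1) show ?thesis
    using coeff_sum_monom[of "\<lambda>j. \<alpha> (A j)" p i] by simp
qed

abbreviation low_degree_kernel ::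
    "(complex^'n) set \<Rightarrow> (complex^'n \<Rightarrow> complex) set \<Rightarrow> (nat \<Rightarrow> complex^'n) \<Rightarrow> nat \<Rightarrow> nat \<Rightarrow> (complex^'n) set"
  where "low_degree_kernel h \<Phi> A p i \<equiv> common_kernel h {\<alpha> \<in> \<Phi>. root_deg \<alpha> A p < i}"

lemma Bstratum_eq_low_degree_kernel:
  assumes "\<not> (\<exists>\<alpha>\<in>\<Phi>. root_deg \<alpha> A p = i)"
  shows "Bstratum h \<Phi> A p i = low_degree_kernel h \<Phi> A p i"
  using assms unfolding Bstratum_def common_kernel_def by auto

lemma low_degree_kernel_drops:
  assumes "i \<in> {1..p}" "A i \<in> h" "\<alpha> \<in> \<Phi>" "root_deg \<alpha> A p = i"
  shows "low_degree_kernel h \<Phi> A p (Suc i) \<noteq> low_degree_kernel h \<Phi> A p i"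
proof -
  have "A i \<in> low_degree_kernel h \<Phi> A p i"
    using assms(1,2) root_deg_less_imp_vanishes unfolding common_kernel_def by auto
  moreover have "\<alpha> (A i) \<noteq> 0"
    using assms(1,4) by (rule root_deg_eq_imp_nonvanishing)
  then have "A i \<notin> low_degree_kernel h \<Phi> A p (Suc i)"
    using assms(3,4) unfolding common_kernel_def by auto
  ultimately show ?thesis
    by blast
qed

lemma subspace_low_degree_kernel:
  assumes "vec.subspace h"
  shows "vec.subspace (low_degree_kernel h (lie_roots B h) A p i)"
  by (intro subspace_common_kernel[OF assms]) (auto simp: lie_roots_def)

lemma nontrivial_pi1_imp_low_degree_kernel_drops:
  assumes "vec.subspace h" "i \<in> {1..p}" "A i \<in> h"
    and "\<not> trivial_pi1 (Bstratum h (lie_roots B h) A p i) (A i)"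
  shows "low_degree_kernel h (lie_roots B h) A p (Suc i) \<noteq> low_degree_kernel h (lie_roots B h) A p i"
proof (cases "\<exists>\<alpha>\<in>lie_roots B h. root_deg \<alpha> A p = i")
  case True
  then obtain \<alpha> where "\<alpha> \<in> lie_roots B h" "root_deg \<alpha> A p = i"
    by blast
  with assms(2,3) show ?thesis
    by (intro low_degree_kernel_drops)
next
  case False
  then have "Bstratum h (lie_roots B h) A p i = low_degree_kernel h (lie_roots B h) A p i"
    by (rule Bstratum_eq_low_degree_kernel)
  then have "simply_connected (Bstratum h (lie_roots B h) A p i)"
    using subspace_low_degree_kernel[OF assms(1)]
    by (simp add: convex_imp_simply_connected vec_subspace_imp_convex)
  then have "trivial_pi1 (Bstratum h (lie_roots B h) A p i) (A i)"
    by (rule simply_connected_imp_trivial_pi1)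
  with assms(4) show ?thesis
    by contradiction
qed

theorem corollary5p6:
  fixes B :: "complex^'n \<Rightarrow> complex^'n \<Rightarrow> complex^'n"
    and h :: "(complex^'n) set"
    and A :: "nat \<Rightarrow> complex^'n"
    and p :: nat
  assumes "simple_lie_algebra B"
    and "cartan_subalgebra B h"
    and "p \<ge> 1"
    and "\<forall>i\<in>{1..p}. A i \<in> h"
    and "A p \<noteq> 0"
  shows "card {i \<in> {1..p}. \<not> trivial_pi1 (Bstratum h (lie_roots B h) A p i) (A i)} \<le> vec.dim h"
proof -
  let ?K = "low_degree_kernel h (lie_roots B h) A p"
  have h: "vec.subspace h"
    using assms(2) unfolding cartan_subalgebra_def lie_subalgebra_def by blast
  have "card {i \<in> {1..p}. \<not> trivial_pi1 (Bstratum h (lie_roots B h) A p i) (A i)}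
      \<le> card {i \<in> {1..p}. ?K (Suc i) \<noteq> ?K i}"
    using nontrivial_pi1_imp_low_degree_kernel_drops[OF h] assms(4) by (intro card_mono) auto
  also have "\<dots> \<le> vec.dim (?K 1)"
    using subspace_low_degree_kernel[OF h]
    by (rule card_proper_descents_le_dim) (auto simp: common_kernel_def)
  also have "\<dots> \<le> vec.dim h"
    by (rule vec.dim_subset) (auto simp: common_kernel_def)
  finally show ?thesis .
qed

end
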